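(* Let $\alpha\in(\tfrac12,1)$, $0<\eta_0\le\tfrac12$, $\eta_t=\eta_0t^{-\alpha}$. Then for every $t>0$, $$\mathbb E\|\Delta_t\|_2^2\le\frac{3\eta_0\,\mathrm{Tr}(\Gamma)}{(1-\gamma)\lambda_0}\,t^{-\alpha}+O(t^{-1}),$$ where the $O(t^{-1})$ term has a constant depending on problem parameters but not on $t$.
   Context: Setting: $\mathcal S$ is a finite state space, $\gamma\in[0,1)$ a discount factor, $P(\cdot\mid s)$ a Markov transition kernel on $\mathcal S$ (induced by a fixed policy) with unique stationary distribution $\mu$, and $r:\mathcal S\to[0,1]$ the expected reward. A feature map $\phi:\mathcal S\to\mathbb R^d$ satisfies $\|\phi(s)\|_2\le1$ for all $s$. Define $A=\mathbb E_{s\sim\mu,s'\sim P(\cdot\mid s)}[\phi(s)(\phi(s)-\gamma\phi(s'))^\top]$, $b=\mathbb E_{s\sim\mu}[\phi(s)r(s)]$, $\Sigma=\mathbb E_{s\sim\mu}[\phi(s)\phi(s)^\top]$, $\lambda_0=\lambda_{\min}(\Sigma)$ (assumed $>0$), $\theta^\star=A^{-1}b$. Samples: $(s_t,s_t',r_t)$, $t=1,2,\dots$, are i.i.d. with $s_t\sim\mu$, $s_t'\sim P(\cdot\mid s_t)$, $r_t\in[0,1]$ with $\mathbb E[r_t\mid s_t]=r(s_t)$; set $A_t=\phi(s_t)(\phi(s_t)-\gamma\phi(s_t'))^\top$, $b_t=r_t\phi(s_t)$. TD iterates: $\theta_0=0$, $\theta_t=\theta_{t-1}-\eta_t(A_t\theta_{t-1}-b_t)$;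 $\Delta_t=\theta_t-\theta^\star$. $\Gamma=\mathbb E[(A_t\theta^\star-b_t)(A_t\theta^\star-b_t)^\top]$. *)

theory Defs
  imports "HOL-Probability.Probability"
begin

definition outer :: "real^'d \<Rightarrow> real^'d \<Rightarrow> real^'d^'d" where
  "outer u v = (\<chi> i j. u $ i * v $ j)"

definition eigenvalues :: "real^'d^'d \<Rightarrow> real set" where
  "eigenvalues M = {l. \<exists>v. v \<noteq> 0 \<and> M *v v = l *\<^sub>R v}"

definition lambda_min :: "real^'d^'d \<Rightarrow> real" where
  "lambda_min M = Min (eigenvalues M)"

definition tdA :: "('s::finite \<Rightarrow> real) \<Rightarrow> ('s \<Rightarrow> 's \<Rightarrow> real) \<Rightarrow> real \<Rightarrow> ('s \<Rightarrow> real^'d) \<Rightarrow> real^'d^'d" where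
  "tdA mu P \<gamma> \<phi> = (\<Sum>s\<in>UNIV. \<Sum>s'\<in>UNIV. (mu s * P s s') *\<^sub>R outer (\<phi> s) (\<phi> s - \<gamma> *\<^sub>R \<phi> s'))"

definition tdb :: "('s::finite \<Rightarrow> real) \<Rightarrow> ('s \<Rightarrow> real) \<Rightarrow> ('s \<Rightarrow> real^'d) \<Rightarrow> real^'d" where
  "tdb mu r \<phi> = (\<Sum>s\<in>UNIV. (mu s * r s) *\<^sub>R \<phi> s)"

definition tdSigma :: "('s::finite \<Rightarrow> real) \<Rightarrow> ('s \<Rightarrow> real^'d) \<Rightarrow> real^'d^'d" where
  "tdSigma mu \<phi> = (\<Sum>s\<in>UNIV. mu s *\<^sub>R outer (\<phi> s) (\<phi> s))"

definition stationary :: "('s::finite \<Rightarrow> 's \<Rightarrow> real) \<Rightarrow> ('s \<Rightarrow> real) \<Rightarrow> bool" where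
  "stationary P mu \<longleftrightarrow> (\<forall>s. mu s \<ge> 0) \<and> (\<Sum>s\<in>UNIV. mu s) = 1 \<and>
      (\<forall>s'. (\<Sum>s\<in>UNIV. mu s * P s s') = mu s')"

definition sampleA :: "real \<Rightarrow> ('s \<Rightarrow> real^'d) \<Rightarrow> 's \<Rightarrow> 's \<Rightarrow> real^'d^'d" where
  "sampleA \<gamma> \<phi> s s' = outer (\<phi> s) (\<phi> s - \<gamma> *\<^sub>R \<phi> s')"

definition sampleb :: "('s \<Rightarrow> real^'d) \<Rightarrow> 's \<Rightarrow> real \<Rightarrow> real^'d" where
  "sampleb \<phi> s rr = rr *\<^sub>R \<phi> s"

text \<open>TD iterates: theta_0 = 0, theta_t = theta_{t-1} - eta_t (A_t theta_{t-1} - b_t).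
  S t, S' t, R t are the t-th sample (t = 1, 2, ...), eta the step-size sequence.\<close>
fun td_iter :: "(nat \<Rightarrow> real) \<Rightarrow> real \<Rightarrow> ('s \<Rightarrow> real^'d) \<Rightarrow> (nat \<Rightarrow> 'w \<Rightarrow> 's) \<Rightarrow> (nat \<Rightarrow> 'w \<Rightarrow> 's)
    \<Rightarrow> (nat \<Rightarrow> 'w \<Rightarrow> real) \<Rightarrow> nat \<Rightarrow> 'w \<Rightarrow> real^'d" where
  "td_iter eta \<gamma> \<phi> S S' R 0 \<omega> = 0"
| "td_iter eta \<gamma> \<phi> S S' R (Suc t) \<omega> =
     (let th = td_iter eta \<gamma> \<phi> S S' R t \<omega> in
      th - eta (Suc t) *\<^sub>R (sampleA \<gamma> \<phi> (S (Suc t) \<omega>) (S' (Suc t) \<omega>) *v th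
                            - sampleb \<phi> (S (Suc t) \<omega>) (R (Suc t) \<omega>)))"

end

theory Submission
  imports Defs "HOL-Real_Asymp.Real_Asymp"
begin

text \<open>
  With \<open>\<Delta>\<^sub>t = \<theta>\<^sub>t - \<theta>\<^sup>*\<close> the TD update reads
  \<open>\<Delta>\<^sub>t = \<Delta>\<^sub>t\<^sub>-\<^sub>1 - \<eta>\<^sub>t (A\<^sub>t \<Delta>\<^sub>t\<^sub>-\<^sub>1 + \<xi>\<^sub>t)\<close> with the noise \<open>\<xi>\<^sub>t = A\<^sub>t \<theta>\<^sup>* - b\<^sub>t\<close>.
  The sample \<open>t\<close> is independent of \<open>\<Delta>\<^sub>t\<^sub>-\<^sub>1\<close>, so the cross terms can be averaged over the
  sample first: \<open>E \<xi>\<^sub>t = A \<theta>\<^sup>* - b = 0\<close>, and \<open>E A\<^sub>t = A\<close> with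
  \<open>x\<^sup>T A x \<ge> (1 - \<gamma>) x\<^sup>T \<Sigma> x \<ge> (1 - \<gamma>) \<lambda>\<^sub>0 |x|\<^sup>2\<close> by stationarity of \<open>\<mu>\<close> and Cauchy-Schwarz.
  Since \<open>|A\<^sub>t| \<le> 2\<close>, the mean squared error \<open>u\<^sub>t\<close> satisfies
  \<open>u\<^sub>t \<le> (1 - 2c\<eta>\<^sub>t + 8\<eta>\<^sub>t\<^sup>2) u\<^sub>t\<^sub>-\<^sub>1 + 2 Tr(\<Gamma>) \<eta>\<^sub>t\<^sup>2\<close> with \<open>c = (1 - \<gamma>) \<lambda>\<^sub>0\<close>.
  For \<open>\<eta>\<^sub>t = \<eta>\<^sub>0 t\<^sup>-\<^sup>\<alpha>\<close> and large \<open>t\<close> the contraction \<open>2c\<eta>\<^sub>t - 8\<eta>\<^sub>t\<^sup>2\<close> exceeds \<open>1/t\<close> and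
  \<open>\<eta>\<^sub>t\<^sub>-\<^sub>1 - \<eta>\<^sub>t = O(t\<^sup>-\<^sup>1\<^sup>-\<^sup>\<alpha>)\<close> is of smaller order than \<open>\<eta>\<^sub>t\<^sup>2\<close> (here \<open>\<alpha> < 1\<close>), so the bound
  \<open>u\<^sub>t \<le> (3 Tr(\<Gamma>)/c) \<eta>\<^sub>t + D/t\<close> propagates by induction.
\<close>

section \<open>A deterministic recursion with decaying step sizes\<close>

lemma recursion_bound_step:
  fixes c G D h h' u u' :: real
  assumes "c > 0" "G \<ge> 0" "D \<ge> 0" "n \<ge> 1" "0 \<le> h'" "h' \<le> h" "12 * h \<le> c"
    and decrement: "3 * (h - h') \<le> 2 * c * h'\<^sup>2"
    and contraction: "1 / real (Suc n) \<le> 2 * c * h' - 8 * h'\<^sup>2" "2 * c * h' \<le> 1"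
    and step: "u' \<le> (1 - 2 * c * h' + 8 * h'\<^sup>2) * u + 2 * G * h'\<^sup>2"
    and bound: "u \<le> 3 * G / c * h + D / real n"
  shows "u' \<le> 3 * G / c * h' + D / real (Suc n)"
proof -
  define a where "a = 2 * c * h' - 8 * h'\<^sup>2"
  have "0 \<le> 1 - a" unfolding a_def using contraction(2) zero_le_power2[of h'] by linarith
  have "6 * c * h' * h' \<le> 6 * c * h' * h"
    using assms by (simp add: mult_left_mono)
  moreover have "12 * h * (2 * h'\<^sup>2) \<le> c * (2 * h'\<^sup>2)"
    using assms(7) by (rule mult_right_mono) simp
  ultimately have "3 * (h - h') + 2 * c * h'\<^sup>2 \<le> 3 * a * h"
    using decrement unfolding a_def by (simp add: algebra_simps power2_eq_square)
  then have "G * (3 * (h - h') + 2 * c * h'\<^sup>2) \<le> G * (3 * a * h)"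
    using \<open>G \<ge> 0\<close> by (rule mult_left_mono)
  then have "((1 - a) * (3 * G * h) + 2 * G * h'\<^sup>2 * c) / c \<le> 3 * G * h' / c"
    using \<open>c > 0\<close> by (simp add: algebra_simps divide_right_mono)
  then have drift: "(1 - a) * (3 * G / c * h) + 2 * G * h'\<^sup>2 \<le> 3 * G / c * h'"
    using \<open>c > 0\<close> by (simp add: add_divide_distrib)
  have "1 - a \<le> real n / real (Suc n)"
    using contraction(1) \<open>n \<ge> 1\<close> by (simp add: a_def field_simps)
  then have "(1 - a) * D \<le> real n / real (Suc n) * D" using \<open>D \<ge> 0\<close> by (rule mult_right_mono)
  then have shrink: "(1 - a) * D / real n \<le> D / real (Suc n)"
    using \<open>n \<ge> 1\<close> by (simp add: field_simps)
  have "u' \<le> (1 - a) * u + 2 * G * h'\<^sup>2"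
    using step by (simp add: a_def algebra_simps)
  also have "\<dots> \<le> (1 - a) * (3 * G / c * h + D / real n) + 2 * G * h'\<^sup>2"
    using bound \<open>0 \<le> 1 - a\<close> by (simp add: mult_left_mono)
  also have "\<dots> = ((1 - a) * (3 * G / c * h) + 2 * G * h'\<^sup>2) + (1 - a) * D / real n"
    by (simp add: algebra_simps)
  also have "\<dots> \<le> 3 * G / c * h' + D / real (Suc n)"
    using drift shrink by (rule add_mono)
  finally show ?thesis .
qed

lemma decaying_recursion_bound:
  fixes u \<eta> :: "nat \<Rightarrow> real" and c G :: real
  assumes "c > 0" "G \<ge> 0" and u_nonneg: "\<And>n. u n \<ge> 0" and \<eta>_nonneg: "\<And>n. \<eta> n \<ge> 0"
    and recursion: "\<And>n. u (Suc n) \<le> (1 - 2 * c * \<eta> (Suc n) + 8 * (\<eta> (Suc n))\<^sup>2) * u n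
                          + 2 * G * (\<eta> (Suc n))\<^sup>2"
    and step_sizes: "eventually (\<lambda>n. 1 / real (Suc n) \<le> 2 * c * \<eta> (Suc n) - 8 * (\<eta> (Suc n))\<^sup>2
         \<and> 2 * c * \<eta> (Suc n) \<le> 1 \<and> 12 * \<eta> n \<le> c
         \<and> 3 * (\<eta> n - \<eta> (Suc n)) \<le> 2 * c * (\<eta> (Suc n))\<^sup>2 \<and> \<eta> (Suc n) \<le> \<eta> n) sequentially"
  shows "\<exists>D. \<forall>t\<ge>1. u t \<le> 3 * G / c * \<eta> t + D / real t"
proof -
  obtain N0 where N0: "\<And>n. n \<ge> N0 \<Longrightarrow> 1 / real (Suc n) \<le> 2 * c * \<eta> (Suc n) - 8 * (\<eta> (Suc n))\<^sup>2
         \<and> 2 * c * \<eta> (Suc n) \<le> 1 \<and> 12 * \<eta> n \<le> c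
         \<and> 3 * (\<eta> n - \<eta> (Suc n)) \<le> 2 * c * (\<eta> (Suc n))\<^sup>2 \<and> \<eta> (Suc n) \<le> \<eta> n"
    using step_sizes unfolding eventually_sequentially by blast
  define N where "N = max N0 1"
  define D where "D = (\<Sum>k\<le>N. real k * u k)"
  have "D \<ge> 0" unfolding D_def using u_nonneg by (intro sum_nonneg) auto
  have initial: "u t \<le> 3 * G / c * \<eta> t + D / real t" if "1 \<le> t" "t \<le> N" for t
  proof -
    have "real t * u t \<le> D"
      unfolding D_def using that u_nonneg by (intro member_le_sum) auto
    with that have "u t \<le> D / real t" by (simp add: pos_le_divide_eq mult.commute)
    moreover have "0 \<le> 3 * G / c * \<eta> t" using assms(1,2) \<eta>_nonneg by simp
    ultimately show ?thesis by linarith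
  qed
  have "u n \<le> 3 * G / c * \<eta> n + D / real n" if "n \<ge> N" for n
    using that
  proof (induction n rule: dec_induct)
    case base
    show ?case using initial[of N] by (simp add: N_def)
  next
    case (step n)
    then have "n \<ge> N0" "n \<ge> 1" by (auto simp: N_def)
    with N0 \<eta>_nonneg show ?case
      by (intro recursion_bound_step[OF assms(1,2) \<open>D \<ge> 0\<close> _ _ _ _ _ _ _ recursion step.IH]) auto
  qed
  with initial show ?thesis by (metis linorder_le_cases)
qed

lemma powr_step_size_conditions:
  fixes c e0 \<alpha> :: real
  assumes "1/2 < \<alpha>" "\<alpha> < 1" "c > 0" "e0 > 0"
  defines "\<eta> \<equiv> \<lambda>n::nat. e0 * real n powr (-\<alpha>)"
  shows "eventually (\<lambda>n. 1 / real (Suc n) \<le> 2 * c * \<eta> (Suc n) - 8 * (\<eta> (Suc n))\<^sup>2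
     \<and> 2 * c * \<eta> (Suc n) \<le> 1 \<and> 12 * \<eta> n \<le> c
     \<and> 3 * (\<eta> n - \<eta> (Suc n)) \<le> 2 * c * (\<eta> (Suc n))\<^sup>2 \<and> \<eta> (Suc n) \<le> \<eta> n) sequentially"
proof -
  have "eventually (\<lambda>x::real. 1/(x+1) \<le> 2*c*(e0*(x+1) powr (-\<alpha>)) - 8*(e0*(x+1) powr (-\<alpha>))^2
     \<and> 2*c*(e0*(x+1) powr (-\<alpha>)) \<le> 1 \<and> 12*(e0*x powr (-\<alpha>)) \<le> c
     \<and> 3*(e0*x powr (-\<alpha>) - e0*(x+1) powr (-\<alpha>)) \<le> 2*c*(e0*(x+1) powr (-\<alpha>))^2
     \<and> e0*(x+1) powr (-\<alpha>) \<le> e0*x powr (-\<alpha>)) at_top"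
    using assms by (intro eventually_conj; real_asymp)
  from eventually_compose_filterlim[OF this filterlim_real_sequentially]
  show ?thesis unfolding \<eta>_def by (simp add: add.commute)
qed

section \<open>Linear algebra of the TD operators\<close>

lemma outer_mult_vector: "outer u v *v x = (v \<bullet> x) *\<^sub>R u"
  by (simp add: vec_eq_iff outer_def matrix_vector_mult_def inner_vec_def sum_distrib_left mult_ac)

lemma sum_matrix_vector_mult:
  fixes A :: "'i \<Rightarrow> real^'n^'m"
  shows "finite I \<Longrightarrow> sum A I *v x = (\<Sum>i\<in>I. A i *v x)"
  by (induction I rule: finite_induct) (auto simp: matrix_vector_mult_add_rdistrib)

lemma norm_outer: "norm (outer u v) = norm u * norm v" for u v :: "real^'d"
proof -
  have "outer u v $ i = u $ i *\<^sub>R v" for i by (simp add: outer_def vec_eq_iff)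
  then have "norm (outer u v) = L2_set (\<lambda>i. \<bar>u $ i\<bar> * norm v) UNIV"
    unfolding norm_vec_def[of "outer u v"] by simp
  also have "\<dots> = L2_set (\<lambda>i. \<bar>u $ i\<bar>) UNIV * norm v"
    by (simp add: L2_set_left_distrib)
  also have "\<dots> = norm u * norm v" by (simp add: norm_vec_def L2_set_def)
  finally show ?thesis .
qed

lemma trace_outer_self: "trace (outer u u) = (norm u)\<^sup>2" for u :: "real^'d"
  by (simp add: trace_def outer_def power2_norm_eq_inner inner_vec_def)

lemma sampleA_mult_vector: "sampleA \<gamma> \<phi> s s' *v x = ((\<phi> s - \<gamma> *\<^sub>R \<phi> s') \<bullet> x) *\<^sub>R \<phi> s"
  by (simp add: sampleA_def outer_mult_vector)

lemma norm_sampleA_mult_vector_le: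
  assumes "\<forall>s. norm (\<phi> s) \<le> 1" "0 \<le> \<gamma>" "\<gamma> \<le> 1"
  shows "norm (sampleA \<gamma> \<phi> s s' *v x) \<le> 2 * norm x"
proof -
  define g where "g = \<phi> s - \<gamma> *\<^sub>R \<phi> s'"
  have "norm g \<le> norm (\<phi> s) + \<gamma> * norm (\<phi> s')"
    using norm_triangle_ineq4[of "\<phi> s" "\<gamma> *\<^sub>R \<phi> s'"] assms(2) by (simp add: g_def)
  also have "\<dots> \<le> 1 + 1 * 1"
    using assms by (intro add_mono mult_mono) auto
  finally have "norm g \<le> 2" by simp
  have "norm (sampleA \<gamma> \<phi> s s' *v x) = \<bar>g \<bullet> x\<bar> * norm (\<phi> s)"
    by (simp add: sampleA_mult_vector g_def)
  also have "\<dots> \<le> \<bar>g \<bullet> x\<bar>"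
    using assms(1) by (simp add: mult_left_le)
  also have "\<dots> \<le> norm g * norm x" by (rule Cauchy_Schwarz_ineq2)
  also have "\<dots> \<le> 2 * norm x" using \<open>norm g \<le> 2\<close> by (simp add: mult_right_mono)
  finally show ?thesis .
qed

lemma inner_tdSigma: "y \<bullet> (tdSigma mu \<phi> *v x) = (\<Sum>s\<in>UNIV. mu s * (\<phi> s \<bullet> x) * (\<phi> s \<bullet> y))"
  by (simp add: tdSigma_def sum_matrix_vector_mult outer_mult_vector inner_sum_right
      flip: scaleR_matrix_vector_assoc) (simp add: inner_commute mult_ac)

lemma inner_tdA: "y \<bullet> (tdA mu P \<gamma> \<phi> *v x)
  = (\<Sum>s\<in>UNIV. \<Sum>s'\<in>UNIV. mu s * P s s' * ((\<phi> s - \<gamma> *\<^sub>R \<phi> s') \<bullet> x) * (\<phi> s \<bullet> y))"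
  by (simp add: tdA_def sum_matrix_vector_mult outer_mult_vector inner_sum_right
      flip: scaleR_matrix_vector_assoc) (simp add: inner_commute mult_ac)

lemma inner_tdb: "y \<bullet> tdb mu r \<phi> = (\<Sum>s\<in>UNIV. mu s * r s * (y \<bullet> \<phi> s))"
  by (simp add: tdb_def inner_sum_right)

text \<open>The key estimate of TD learning: under the stationary distribution the successor
  features have the same second moment as the current ones, so the discounted cross term
  is dominated by the quadratic term.\<close>

lemma tdA_quadratic_form_ge:
  fixes P :: "'s::finite \<Rightarrow> 's \<Rightarrow> real"
  assumes "0 \<le> \<gamma>" and P_nonneg: "\<forall>s s'. 0 \<le> P s s'" and P_sum: "\<forall>s. (\<Sum>s'\<in>UNIV. P s s') = 1"
    and "stationary P mu"
  shows "(1 - \<gamma>) * (x \<bullet> (tdSigma mu \<phi> *v x)) \<le> x \<bullet> (tdA mu P \<gamma> \<phi> *v x)"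
proof -
  define a where "a s = \<phi> s \<bullet> x" for s
  define w where "w s s' = mu s * P s s'" for s s'
  define q where "q = (\<Sum>s\<in>UNIV. mu s * (a s)\<^sup>2)"
  have w_nonneg: "0 \<le> w s s'" for s s'
    using assms(4) P_nonneg by (simp add: w_def stationary_def)
  have sum_current: "(\<Sum>s\<in>UNIV. \<Sum>s'\<in>UNIV. w s s' * (a s)\<^sup>2) = q"
    unfolding q_def w_def
    by (simp add: P_sum mult.assoc[symmetric] mult.commute[of _ "(a _)\<^sup>2"] flip: sum_distrib_left)
  have "(\<Sum>s\<in>UNIV. \<Sum>s'\<in>UNIV. w s s' * (a s')\<^sup>2) = (\<Sum>s'\<in>UNIV. \<Sum>s\<in>UNIV. w s s' * (a s')\<^sup>2)"
    by (rule sum.swap)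
  also have "\<dots> = (\<Sum>s'\<in>UNIV. (\<Sum>s\<in>UNIV. w s s') * (a s')\<^sup>2)"
    by (simp add: sum_distrib_right)
  also have "\<dots> = q"
    using assms(4) by (simp add: stationary_def w_def q_def mult_ac)
  finally have sum_successor: "(\<Sum>s\<in>UNIV. \<Sum>s'\<in>UNIV. w s s' * (a s')\<^sup>2) = q" .
  have "w s s' * (a s * a s') \<le> w s s' * (a s)\<^sup>2 / 2 + w s s' * (a s')\<^sup>2 / 2" for s s'
  proof -
    have "a s * a s' \<le> (a s)\<^sup>2 / 2 + (a s')\<^sup>2 / 2"
      using sum_squares_bound[of "a s" "a s'"] by (simp add: power2_eq_square)
    from mult_left_mono[OF this w_nonneg] show ?thesis by (simp add: distrib_left)
  qed
  then have "(\<Sum>s\<in>UNIV. \<Sum>s'\<in>UNIV. w s s' * (a s * a s'))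
      \<le> (\<Sum>s\<in>UNIV. \<Sum>s'\<in>UNIV. w s s' * (a s)\<^sup>2 / 2 + w s s' * (a s')\<^sup>2 / 2)"
    by (intro sum_mono)
  also have "\<dots> = q"
    using sum_current sum_successor by (simp add: sum.distrib flip: sum_divide_distrib)
  finally have cross: "(\<Sum>s\<in>UNIV. \<Sum>s'\<in>UNIV. w s s' * (a s * a s')) \<le> q" .
  have "x \<bullet> (tdA mu P \<gamma> \<phi> *v x) = (\<Sum>s\<in>UNIV. \<Sum>s'\<in>UNIV. w s s' * (a s)\<^sup>2)
     - \<gamma> * (\<Sum>s\<in>UNIV. \<Sum>s'\<in>UNIV. w s s' * (a s * a s'))"
    by (simp add: inner_tdA a_def w_def inner_diff_left sum_subtractf sum_distrib_left
        algebra_simps power2_eq_square)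
  moreover have "x \<bullet> (tdSigma mu \<phi> *v x) = q"
    by (simp add: inner_tdSigma q_def a_def power2_eq_square mult_ac)
  ultimately show ?thesis
    using sum_current mult_left_mono[OF cross \<open>0 \<le> \<gamma>\<close>] by (simp add: left_diff_distrib)
qed

lemma finite_eigenvalues_symmetric:
  fixes M :: "real^'d^'d"
  assumes sym: "\<And>x y. x \<bullet> (M *v y) = y \<bullet> (M *v x)"
  shows "finite (eigenvalues M)"
proof -
  define f where "f l = (SOME v. v \<noteq> 0 \<and> M *v v = l *\<^sub>R v)" for l
  have f: "f l \<noteq> 0 \<and> M *v f l = l *\<^sub>R f l" if "l \<in> eigenvalues M" for l
    using that unfolding f_def eigenvalues_def by (metis (mono_tags, lifting) someI mem_Collect_eq)
  have "inj_on f (eigenvalues M)"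
    by (rule inj_onI) (metis f scaleR_cancel_right)
  have "pairwise orthogonal (f ` eigenvalues M)"
  proof (clarsimp simp: pairwise_def)
    fix l1 l2 assume l: "l1 \<in> eigenvalues M" "l2 \<in> eigenvalues M" "f l1 \<noteq> f l2"
    have "l1 * (f l2 \<bullet> f l1) = f l2 \<bullet> (M *v f l1)" using f[OF l(1)] by simp
    also have "\<dots> = f l1 \<bullet> (M *v f l2)" by (rule sym)
    also have "\<dots> = l2 * (f l1 \<bullet> f l2)" using f[OF l(2)] by simp
    finally have "(l1 - l2) * (f l1 \<bullet> f l2) = 0" by (simp add: inner_commute algebra_simps)
    moreover have "l1 \<noteq> l2" using l(3) by auto
    ultimately show "orthogonal (f l1) (f l2)" by (simp add: orthogonal_def)
  qed
  moreover have "0 \<notin> f ` eigenvalues M" using f by auto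
  ultimately have "independent (f ` eigenvalues M)" by (rule pairwise_orthogonal_independent)
  then have "finite (f ` eigenvalues M)" using independent_bound by blast
  from this \<open>inj_on f (eigenvalues M)\<close> show ?thesis by (rule finite_imageD)
qed

text \<open>A vector at which the quadratic form attains its infimum \<open>m\<close> on the unit sphere is an
  eigenvector: for \<open>v = M x - m x\<close> the nonnegative function
  \<open>t \<mapsto> q(x + t v) - m |x + t v|\<^sup>2 = 2 t |v|\<^sup>2 + t\<^sup>2 (q v - m |v|\<^sup>2)\<close> vanishes at \<open>0\<close>.\<close>

lemma minimizer_of_quadratic_form_eigenvector:
  fixes M :: "real^'d^'d"
  assumes sym: "\<And>x y. x \<bullet> (M *v y) = y \<bullet> (M *v x)"
    and lower: "\<And>y. m * (norm y)\<^sup>2 \<le> y \<bullet> (M *v y)"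
    and attained: "x \<bullet> (M *v x) = m * (norm x)\<^sup>2"
  shows "M *v x = m *\<^sub>R x"
proof -
  define v where "v = M *v x - m *\<^sub>R x"
  define Q where "Q = v \<bullet> (M *v v) - m * (norm v)\<^sup>2"
  have "Q \<ge> 0" using lower[of v] by (simp add: Q_def)
  have along_v: "0 \<le> 2 * t * (norm v)\<^sup>2 + t\<^sup>2 * Q" for t
  proof -
    have "(norm (x + t *\<^sub>R v))\<^sup>2 = (norm x)\<^sup>2 + 2 * t * (v \<bullet> x) + t\<^sup>2 * (norm v)\<^sup>2"
      by (simp only: power2_norm_eq_inner)
        (simp add: inner_add_left inner_add_right inner_commute power2_eq_square algebra_simps)
    moreover have "(x + t *\<^sub>R v) \<bullet> (M *v (x + t *\<^sub>R v))
        = x \<bullet> (M *v x) + 2 * t * (v \<bullet> (M *v x)) + t\<^sup>2 * (v \<bullet> (M *v v))"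
      using sym[of x v] by (simp add: matrix_vector_right_distrib matrix_vector_mult_scaleR
          inner_add_left inner_add_right power2_eq_square algebra_simps)
    ultimately have "(x + t *\<^sub>R v) \<bullet> (M *v (x + t *\<^sub>R v)) - m * (norm (x + t *\<^sub>R v))\<^sup>2
        = 2 * t * (v \<bullet> (M *v x) - m * (v \<bullet> x)) + t\<^sup>2 * Q"
      using attained by (simp add: Q_def algebra_simps)
    moreover have "v \<bullet> (M *v x) - m * (v \<bullet> x) = (norm v)\<^sup>2"
      by (simp add: v_def power2_norm_eq_inner inner_diff_right)
    ultimately show ?thesis using lower[of "x + t *\<^sub>R v"] by simp
  qed
  have "(norm v)\<^sup>2 = 0"
  proof (rule ccontr)
    define p where "p = (norm v)\<^sup>2"
    assume "(norm v)\<^sup>2 \<noteq> 0"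
    then have "p > 0" by (simp add: p_def)
    define t where "t = - p / (Q + 1)"
    have "t < 0" using \<open>p > 0\<close> \<open>Q \<ge> 0\<close> by (simp add: t_def)
    have "p * Q \<le> p * (Q + 1)" using \<open>p > 0\<close> by simp
    then have "- p \<le> t * Q" using \<open>Q \<ge> 0\<close> by (simp add: t_def field_simps)
    then have "0 < 2 * p + t * Q" using \<open>p > 0\<close> by linarith
    with \<open>t < 0\<close> have "t * (2 * p + t * Q) < 0" by (rule mult_neg_pos)
    moreover have "t * (2 * p + t * Q) = 2 * t * (norm v)\<^sup>2 + t\<^sup>2 * Q"
      by (simp add: p_def power2_eq_square algebra_simps)
    ultimately show False using along_v[of t] by linarith
  qed
  then show ?thesis by (simp add: v_def)
qed

lemma lambda_min_le_quadratic_form: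
  fixes M :: "real^'d^'d"
  assumes sym: "\<And>x y. x \<bullet> (M *v y) = y \<bullet> (M *v x)"
  shows "lambda_min M * (norm x)\<^sup>2 \<le> x \<bullet> (M *v x)"
proof -
  have "continuous_on (sphere 0 1) (\<lambda>y. y \<bullet> (M *v y))"
    by (intro continuous_intros matrix_vector_mult_linear_continuous_on)
  from continuous_attains_inf[OF compact_sphere _ this]
  obtain x0 where x0: "x0 \<in> sphere 0 1"
    and min: "\<And>y. y \<in> sphere 0 1 \<Longrightarrow> x0 \<bullet> (M *v x0) \<le> y \<bullet> (M *v y)"
    by (auto simp: sphere_eq_empty)
  define m where "m = x0 \<bullet> (M *v x0)"
  have lower: "m * (norm y)\<^sup>2 \<le> y \<bullet> (M *v y)" for y
  proof (cases "y = 0")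
    case False
    then have "y /\<^sub>R norm y \<in> sphere 0 1" by simp
    then have "m \<le> (y /\<^sub>R norm y) \<bullet> (M *v (y /\<^sub>R norm y))" unfolding m_def by (rule min)
    also have "\<dots> = y \<bullet> (M *v y) / (norm y)\<^sup>2"
      by (simp add: matrix_vector_mult_scaleR power2_eq_square divide_inverse mult_ac)
    finally show ?thesis using False by (simp add: le_divide_eq)
  qed simp
  have "M *v x0 = m *\<^sub>R x0"
    using x0 by (intro minimizer_of_quadratic_form_eigenvector[OF sym lower]) (simp add: m_def)
  moreover have "x0 \<noteq> 0" using x0 by auto
  ultimately have "m \<in> eigenvalues M" unfolding eigenvalues_def by blast
  then have "lambda_min M \<le> m"
    unfolding lambda_min_def using finite_eigenvalues_symmetric[OF sym] by simp
  then have "lambda_min M * (norm x)\<^sup>2 \<le> m * (norm x)\<^sup>2" by (simp add: mult_right_mono)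
  with lower[of x] show ?thesis by linarith
qed

lemma tdA_coercive:
  fixes P :: "'s::finite \<Rightarrow> 's \<Rightarrow> real"
  assumes "0 \<le> \<gamma>" "\<gamma> \<le> 1" "\<forall>s s'. 0 \<le> P s s'" "\<forall>s. (\<Sum>s'\<in>UNIV. P s s') = 1" "stationary P mu"
  shows "(1 - \<gamma>) * lambda_min (tdSigma mu \<phi>) * (norm x)\<^sup>2 \<le> x \<bullet> (tdA mu P \<gamma> \<phi> *v x)"
proof -
  have "lambda_min (tdSigma mu \<phi>) * (norm x)\<^sup>2 \<le> x \<bullet> (tdSigma mu \<phi> *v x)"
    by (rule lambda_min_le_quadratic_form) (simp add: inner_tdSigma mult_ac)
  then have "(1 - \<gamma>) * (lambda_min (tdSigma mu \<phi>) * (norm x)\<^sup>2) \<le> (1 - \<gamma>) * (x \<bullet> (tdSigma mu \<phi> *v x))"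
    using assms(2) by (simp add: mult_left_mono)
  also have "\<dots> \<le> x \<bullet> (tdA mu P \<gamma> \<phi> *v x)"
    by (rule tdA_quadratic_form_ge[OF assms(1,3-5)])
  finally show ?thesis by (simp add: mult.assoc)
qed

lemma matrix_inv_solves_coercive:
  fixes A :: "real^'n^'n"
  assumes "c > 0" and coercive: "\<And>x. c * (norm x)\<^sup>2 \<le> x \<bullet> (A *v x)"
  shows "A *v (matrix_inv A *v y) = y"
proof -
  have "x = 0" if "A *v x = 0" for x
    using coercive[of x] that \<open>c > 0\<close> by (simp add: mult_le_0_iff)
  then have "invertible A"
    unfolding invertible_left_inverse by (simp add: matrix_left_invertible_ker)
  then have "A ** matrix_inv A = mat 1"
    unfolding matrix_inv_def invertible_def by (rule someI_ex[THEN conjunct1])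
  then show ?thesis by (simp add: matrix_vector_mul_assoc)
qed

section \<open>Expectations over independent and finitely valued variables\<close>

lemma (in prob_space) integral_indep_var_freezing:
  fixes f :: "'b \<Rightarrow> 'b \<Rightarrow> real"
  assumes indep: "indep_var MX X MY Y"
    and f_measurable: "(\<lambda>(x, y). f x y) \<in> borel_measurable (MX \<Otimes>\<^sub>M MY)"
    and integrable: "integrable M (\<lambda>\<omega>. f (X \<omega>) (Y \<omega>))"
    and frozen: "\<And>x. x \<in> space MX \<Longrightarrow> (\<integral>\<omega>. f x (Y \<omega>) \<partial>M) = h x"
  shows "(\<integral>\<omega>. f (X \<omega>) (Y \<omega>) \<partial>M) = (\<integral>\<omega>. h (X \<omega>) \<partial>M)"
proof -
  have X[measurable]: "X \<in> measurable M MX" and Y[measurable]: "Y \<in> measurable M MY"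
    and product: "distr M MX X \<Otimes>\<^sub>M distr M MY Y = distr M (MX \<Otimes>\<^sub>M MY) (\<lambda>\<omega>. (X \<omega>, Y \<omega>))"
    using indep unfolding indep_var_distribution_eq by auto
  have "prob_space (distr M MX X)" "prob_space (distr M MY Y)"
    by (simp_all add: prob_space_distr)
  then interpret XY: pair_sigma_finite "distr M MX X" "distr M MY Y"
    by (intro pair_sigma_finite.intro prob_space_imp_sigma_finite)
  have XY_measurable: "(\<lambda>\<omega>. (X \<omega>, Y \<omega>)) \<in> measurable M (MX \<Otimes>\<^sub>M MY)" by measurable
  have "integrable (distr M MX X \<Otimes>\<^sub>M distr M MY Y) (\<lambda>(x, y). f x y)"
    unfolding product using integrable by (subst integrable_distr_eq[OF XY_measurable f_measurable]) simp
  note Fubini = XY.integral_fst[OF this]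
  have "(\<integral>\<omega>. f (X \<omega>) (Y \<omega>) \<partial>M) = integral\<^sup>L (distr M (MX \<Otimes>\<^sub>M MY) (\<lambda>\<omega>. (X \<omega>, Y \<omega>))) (\<lambda>(x, y). f x y)"
    by (subst integral_distr[OF XY_measurable f_measurable]) simp
  also have "\<dots> = (\<integral>x. (\<integral>y. f x y \<partial>distr M MY Y) \<partial>distr M MX X)"
    unfolding product[symmetric] using Fubini by simp
  also have "\<dots> = (\<integral>\<omega>. (\<integral>y. f (X \<omega>) y \<partial>distr M MY Y) \<partial>M)"
  proof (rule integral_distr[OF X])
    have "case_prod f \<in> borel_measurable (MX \<Otimes>\<^sub>M distr M MY Y)"
      using f_measurable by (simp cong: measurable_cong_sets)
    then show "(\<lambda>x. \<integral>y. f x y \<partial>distr M MY Y) \<in> borel_measurable MX"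
      by (rule XY.M2.borel_measurable_lebesgue_integral)
  qed
  also have "\<dots> = (\<integral>\<omega>. h (X \<omega>) \<partial>M)"
  proof (rule Bochner_Integration.integral_cong[OF refl])
    fix \<omega> assume "\<omega> \<in> space M"
    then have "X \<omega> \<in> space MX" using measurable_space[OF X] by blast
    with f_measurable have "(\<lambda>y. f (X \<omega>) y) \<in> borel_measurable MY"
      using measurable_Pair2 by fastforce
    then show "(\<integral>y. f (X \<omega>) y \<partial>distr M MY Y) = h (X \<omega>)"
      using integral_distr[OF Y] frozen[OF \<open>X \<omega> \<in> space MX\<close>] by metis
  qed
  finally show ?thesis .
qed

lemma (in prob_space) integral_finite_joint_distribution:
  fixes X Y :: "'a \<Rightarrow> 's::finite" and h :: "'s \<Rightarrow> 's \<Rightarrow> real"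
  assumes [measurable]: "X \<in> measurable M (count_space UNIV)" "Y \<in> measurable M (count_space UNIV)"
    and joint: "\<And>s s'. measure M {\<omega>\<in>space M. X \<omega> = s \<and> Y \<omega> = s'} = p s s'"
  shows "(\<integral>\<omega>. h (X \<omega>) (Y \<omega>) \<partial>M) = (\<Sum>s\<in>UNIV. \<Sum>s'\<in>UNIV. p s s' * h s s')"
proof -
  define A where "A s s' = {\<omega>\<in>space M. X \<omega> = s \<and> Y \<omega> = s'}" for s s'
  have [measurable]: "A s s' \<in> sets M" for s s' unfolding A_def by measurable
  have partition: "h (X \<omega>) (Y \<omega>) = (\<Sum>s\<in>UNIV. \<Sum>s'\<in>UNIV. h s s' * indicator (A s s') \<omega>)"
    if "\<omega> \<in> space M" for \<omega>
  proof -
    have "(\<Sum>s\<in>UNIV. \<Sum>s'\<in>UNIV. h s s' * indicator (A s s') \<omega>)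
        = (\<Sum>s\<in>UNIV. if s = X \<omega> then (\<Sum>s'\<in>UNIV. if s' = Y \<omega> then h s s' else 0) else 0)"
      using that by (intro sum.cong refl) (auto simp: A_def)
    then show ?thesis by simp
  qed
  have "(\<integral>\<omega>. h (X \<omega>) (Y \<omega>) \<partial>M) = (\<integral>\<omega>. (\<Sum>s\<in>UNIV. \<Sum>s'\<in>UNIV. h s s' * indicator (A s s') \<omega>) \<partial>M)"
    using partition by (rule Bochner_Integration.integral_cong[OF refl])
  also have "\<dots> = (\<Sum>s\<in>UNIV. \<Sum>s'\<in>UNIV. (\<integral>\<omega>. h s s' * indicator (A s s') \<omega> \<partial>M))"
  proof -
    have integrable: "integrable M (\<lambda>\<omega>. h s s' * indicator (A s s') \<omega>)" for s s'
      by (intro integrable_mult_right integrable_real_indicator) (auto simp: less_top[symmetric])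
    then have "integrable M (\<lambda>\<omega>. \<Sum>s'\<in>UNIV. h s s' * indicator (A s s') \<omega>)" for s
      by (rule Bochner_Integration.integrable_sum)
    then have "(\<integral>\<omega>. (\<Sum>s\<in>UNIV. \<Sum>s'\<in>UNIV. h s s' * indicator (A s s') \<omega>) \<partial>M)
        = (\<Sum>s\<in>UNIV. (\<integral>\<omega>. (\<Sum>s'\<in>UNIV. h s s' * indicator (A s s') \<omega>) \<partial>M))"
      by (rule Bochner_Integration.integral_sum)
    also have "\<dots> = (\<Sum>s\<in>UNIV. \<Sum>s'\<in>UNIV. (\<integral>\<omega>. h s s' * indicator (A s s') \<omega> \<partial>M))"
      by (rule sum.cong[OF refl], rule Bochner_Integration.integral_sum[OF integrable])
    finally show ?thesis .
  qed
  also have "\<dots> = (\<Sum>s\<in>UNIV. \<Sum>s'\<in>UNIV. h s s' * measure M (A s s'))"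
    by simp
  finally show ?thesis by (simp add: A_def joint mult.commute)
qed

lemma (in prob_space) measure_finite_marginal:
  fixes X Y :: "'a \<Rightarrow> 's::finite"
  assumes [measurable]: "X \<in> measurable M (count_space UNIV)" "Y \<in> measurable M (count_space UNIV)"
    and joint: "\<And>s s'. measure M {\<omega>\<in>space M. X \<omega> = s \<and> Y \<omega> = s'} = p s s'"
  shows "measure M {\<omega>\<in>space M. X \<omega> = s} = (\<Sum>s'\<in>UNIV. p s s')"
proof -
  have "{\<omega>\<in>space M. X \<omega> = s} \<in> sets M" by measurable
  then have "measure M {\<omega>\<in>space M. X \<omega> = s} = (\<integral>\<omega>. indicator {\<omega>\<in>space M. X \<omega> = s} \<omega> \<partial>M)"
    by simp
  also have "\<dots> = (\<integral>\<omega>. of_bool (X \<omega> = s) \<partial>M)"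
    by (rule Bochner_Integration.integral_cong) (auto simp: indicator_def)
  also have "\<dots> = (\<Sum>s1\<in>UNIV. \<Sum>s'\<in>UNIV. p s1 s' * of_bool (s1 = s))"
    by (fact integral_finite_joint_distribution[OF assms, of "\<lambda>a b. of_bool (a = s)"])
  also have "\<dots> = (\<Sum>s'\<in>UNIV. p s s')"
    by (simp flip: sum_distrib_right)
  finally show ?thesis .
qed

lemma (in prob_space) integral_mult_finite_conditional_mean:
  fixes X :: "'a \<Rightarrow> 's::finite" and V :: "'a \<Rightarrow> real"
  assumes [measurable]: "X \<in> measurable M (count_space UNIV)" and "integrable M V"
    and conditional_mean: "\<And>s. (\<integral>\<omega>. V \<omega> * indicator {\<omega>\<in>space M. X \<omega> = s} \<omega> \<partial>M)
                                = v s * measure M {\<omega>\<in>space M. X \<omega> = s}"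
  shows "(\<integral>\<omega>. V \<omega> * g (X \<omega>) \<partial>M) = (\<Sum>s\<in>UNIV. v s * measure M {\<omega>\<in>space M. X \<omega> = s} * g s)"
proof -
  define A where "A s = {\<omega>\<in>space M. X \<omega> = s}" for s
  have [measurable]: "A s \<in> sets M" for s unfolding A_def by measurable
  have partition: "V \<omega> * g (X \<omega>) = (\<Sum>s\<in>UNIV. g s * (V \<omega> * indicator (A s) \<omega>))"
    if "\<omega> \<in> space M" for \<omega>
  proof -
    have "(\<Sum>s\<in>UNIV. g s * (V \<omega> * indicator (A s) \<omega>)) = (\<Sum>s\<in>UNIV. if s = X \<omega> then g s * V \<omega> else 0)"
      using that by (intro sum.cong refl) (auto simp: A_def)
    then show ?thesis by simp
  qed
  have "(\<integral>\<omega>. V \<omega> * g (X \<omega>) \<partial>M) = (\<integral>\<omega>. (\<Sum>s\<in>UNIV. g s * (V \<omega> * indicator (A s) \<omega>)) \<partial>M)"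
    using partition by (rule Bochner_Integration.integral_cong[OF refl])
  also have "\<dots> = (\<Sum>s\<in>UNIV. g s * (\<integral>\<omega>. V \<omega> * indicator (A s) \<omega> \<partial>M))"
    using \<open>integrable M V\<close>
    by (simp add: Bochner_Integration.integral_sum integrable_real_mult_indicator)
  finally show ?thesis by (simp add: A_def conditional_mean mult_ac)
qed

lemma (in finite_measure) integrable_inner_bounded:
  fixes X Y :: "'a \<Rightarrow> 'b::euclidean_space"
  assumes [measurable]: "X \<in> borel_measurable M" "Y \<in> borel_measurable M"
    and "\<forall>\<omega>\<in>space M. norm (X \<omega>) \<le> a" "\<forall>\<omega>\<in>space M. norm (Y \<omega>) \<le> b"
  shows "integrable M (\<lambda>\<omega>. X \<omega> \<bullet> Y \<omega>)"
proof (rule integrable_const_bound[where B = "a * b"])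
  show "AE \<omega> in M. norm (X \<omega> \<bullet> Y \<omega>) \<le> a * b"
  proof (rule AE_I2)
    fix \<omega> assume "\<omega> \<in> space M"
    have "norm (X \<omega> \<bullet> Y \<omega>) \<le> norm (X \<omega>) * norm (Y \<omega>)"
      by (simp add: Cauchy_Schwarz_ineq2)
    also have "\<dots> \<le> a * b"
      using assms(3,4) \<open>\<omega> \<in> space M\<close> by (intro mult_mono) (auto intro: order_trans[OF norm_ge_zero])
    finally show "norm (X \<omega> \<bullet> Y \<omega>) \<le> a * b" .
  qed
qed measurable

lemma trace_integral_outer_self:
  fixes v :: "'a \<Rightarrow> real^'d"
  assumes v: "v \<in> borel_measurable M" and integrable: "integrable M (\<lambda>\<omega>. (norm (v \<omega>))\<^sup>2)"
  shows "trace (\<integral>\<omega>. outer (v \<omega>) (v \<omega>) \<partial>M) = (\<integral>\<omega>. (norm (v \<omega>))\<^sup>2 \<partial>M)"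
proof -
  have "continuous_on UNIV (\<lambda>u::real^'d. outer u u)"
    unfolding outer_def by (intro continuous_intros)
  from measurable_compose[OF v borel_measurable_continuous_onI[OF this]]
  have "(\<lambda>\<omega>. outer (v \<omega>) (v \<omega>)) \<in> borel_measurable M" .
  with integrable have "integrable M (\<lambda>\<omega>. outer (v \<omega>) (v \<omega>))"
    by (rule Bochner_Integration.integrable_bound) (simp add: norm_outer power2_eq_square)
  moreover have "bounded_linear (\<lambda>X::real^'d^'d. trace X)"
    unfolding trace_def
    by (intro bounded_linear_sum bounded_linear_compose[OF bounded_linear_vec_nth] bounded_linear_vec_nth)
  ultimately show ?thesis
    by (simp add: trace_outer_self flip: integral_bounded_linear)
qed

section \<open>The TD iteration driven by i.i.d. samples\<close>

definition td_noise :: "real \<Rightarrow> ('s \<Rightarrow> real^'d) \<Rightarrow> real^'d \<Rightarrow> 's \<Rightarrow> 's \<Rightarrow> real \<Rightarrow> real^'d" where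
  "td_noise \<gamma> \<phi> \<theta> s s' rr = sampleA \<gamma> \<phi> s s' *v \<theta> - sampleb \<phi> s rr"

lemma norm_td_noise_le:
  assumes "\<forall>s. norm (\<phi> s) \<le> 1" "0 \<le> \<gamma>" "\<gamma> \<le> 1" "\<bar>rr\<bar> \<le> 1"
  shows "norm (td_noise \<gamma> \<phi> \<theta> s s' rr) \<le> 2 * norm \<theta> + 1"
proof -
  have "norm (sampleb \<phi> s rr) \<le> 1"
    using assms(1,4) by (simp add: sampleb_def mult_le_one)
  then show ?thesis
    using norm_triangle_ineq4[of "sampleA \<gamma> \<phi> s s' *v \<theta>" "sampleb \<phi> s rr"]
      norm_sampleA_mult_vector_le[OF assms(1-3), of s s' \<theta>] unfolding td_noise_def by linarith
qed

lemma td_iter_Suc_minus: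
  "td_iter eta \<gamma> \<phi> S S' R (Suc t) \<omega> - \<theta>
   = (td_iter eta \<gamma> \<phi> S S' R t \<omega> - \<theta>) - eta (Suc t) *\<^sub>R
       (sampleA \<gamma> \<phi> (S (Suc t) \<omega>) (S' (Suc t) \<omega>) *v (td_iter eta \<gamma> \<phi> S S' R t \<omega> - \<theta>)
        + td_noise \<gamma> \<phi> \<theta> (S (Suc t) \<omega>) (S' (Suc t) \<omega>) (R (Suc t) \<omega>))"
  by (simp add: td_noise_def Let_def matrix_vector_mult_diff_distrib)

lemma measurable_sampleA_mult_vector[measurable]:
  fixes \<phi> :: "'s::countable \<Rightarrow> real^'d"
  assumes [measurable]: "f \<in> measurable N (count_space UNIV)" "g \<in> measurable N (count_space UNIV)"
    "h \<in> borel_measurable N"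
  shows "(\<lambda>x. sampleA \<gamma> \<phi> (f x) (g x) *v h x) \<in> borel_measurable N"
  unfolding sampleA_mult_vector by measurable

lemma measurable_td_noise[measurable]:
  fixes \<phi> :: "'s::countable \<Rightarrow> real^'d"
  assumes [measurable]: "f \<in> measurable N (count_space UNIV)" "g \<in> measurable N (count_space UNIV)"
    "h \<in> borel_measurable N"
  shows "(\<lambda>x. td_noise \<gamma> \<phi> \<theta> (f x) (g x) (h x)) \<in> borel_measurable N"
  unfolding td_noise_def sampleb_def by measurable

text \<open>Writing the iterate as a function of the samples \<open>1, \<dots>, t\<close> exhibits its independence
  from the later samples.\<close>

definition td_iter_samples ::
  "(nat \<Rightarrow> real) \<Rightarrow> real \<Rightarrow> ('s \<Rightarrow> real^'d) \<Rightarrow> nat \<Rightarrow> (nat \<Rightarrow> 's \<times> 's \<times> real) \<Rightarrow> real^'d" where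
  "td_iter_samples eta \<gamma> \<phi> t z =
     td_iter eta \<gamma> \<phi> (\<lambda>i _. fst (z i)) (\<lambda>i _. fst (snd (z i))) (\<lambda>i _. snd (snd (z i))) t ()"

lemma td_iter_samples_0 [simp]: "td_iter_samples eta \<gamma> \<phi> 0 = (\<lambda>_. 0)"
  by (simp add: td_iter_samples_def fun_eq_iff)

lemma td_iter_samples_Suc:
  "td_iter_samples eta \<gamma> \<phi> (Suc t) z = td_iter_samples eta \<gamma> \<phi> t z - eta (Suc t) *\<^sub>R
     (sampleA \<gamma> \<phi> (fst (z (Suc t))) (fst (snd (z (Suc t)))) *v td_iter_samples eta \<gamma> \<phi> t z
      - sampleb \<phi> (fst (z (Suc t))) (snd (snd (z (Suc t)))))"
  by (simp add: td_iter_samples_def Let_def)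

lemma td_iter_samples_cong:
  "(\<And>i. i \<in> {1..t} \<Longrightarrow> z i = z' i) \<Longrightarrow> td_iter_samples eta \<gamma> \<phi> t z = td_iter_samples eta \<gamma> \<phi> t z'"
  by (induction t) (simp_all add: td_iter_samples_Suc)

lemma td_iter_eq_samples:
  "td_iter eta \<gamma> \<phi> S S' R t \<omega>
   = td_iter_samples eta \<gamma> \<phi> t (restrict (\<lambda>i. (S i \<omega>, S' i \<omega>, R i \<omega>)) {1..t})"
proof (induction t)
  case (Suc t)
  define z where "z = restrict (\<lambda>i. (S i \<omega>, S' i \<omega>, R i \<omega>)) {1..Suc t}"
  have "td_iter eta \<gamma> \<phi> S S' R t \<omega> = td_iter_samples eta \<gamma> \<phi> t z"
    unfolding Suc.IH z_def by (rule td_iter_samples_cong) simp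
  moreover have "z (Suc t) = (S (Suc t) \<omega>, S' (Suc t) \<omega>, R (Suc t) \<omega>)" by (simp add: z_def)
  ultimately show ?case
    unfolding z_def[symmetric] by (simp add: td_iter_samples_Suc Let_def)
qed simp

abbreviation sample_measure :: "('s \<times> 's \<times> real) measure" where
  "sample_measure \<equiv> count_space UNIV \<Otimes>\<^sub>M count_space UNIV \<Otimes>\<^sub>M borel"

lemma td_iter_samples_measurable[measurable]:
  fixes \<phi> :: "'s::countable \<Rightarrow> real^'d"
  assumes "{1..t} \<subseteq> I"
  shows "td_iter_samples eta \<gamma> \<phi> t \<in> borel_measurable (PiM I (\<lambda>_. sample_measure))"
  using assms
proof (induction t)
  case (Suc t)
  have "{1..t} \<subseteq> I" using Suc.prems by auto
  note [measurable] = Suc.IH[OF this]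
  have [measurable]: "Suc t \<in> I" using Suc.prems by auto
  show ?case unfolding td_iter_samples_Suc[abs_def] sampleb_def by measurable
qed simp

lemma norm_sq_descent_step_le:
  fixes d a b :: "'a::real_inner"
  assumes "norm a \<le> 2 * norm d"
  shows "(norm (d - e *\<^sub>R (a + b)))\<^sup>2
    \<le> (norm d)\<^sup>2 - 2 * e * (d \<bullet> a) - 2 * e * (d \<bullet> b) + e\<^sup>2 * (8 * (norm d)\<^sup>2 + 2 * (norm b)\<^sup>2)"
proof -
  have "(norm (a + b))\<^sup>2 \<le> (norm a + norm b)\<^sup>2"
    by (simp add: norm_triangle_ineq power_mono)
  also have "\<dots> \<le> 2 * (norm a)\<^sup>2 + 2 * (norm b)\<^sup>2"
    using sum_squares_bound[of "norm a" "norm b"] by (simp add: power2_eq_square algebra_simps)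
  also have "\<dots> \<le> 8 * (norm d)\<^sup>2 + 2 * (norm b)\<^sup>2"
    using power_mono[OF assms, of 2] by (simp add: power_mult_distrib)
  finally have "e\<^sup>2 * (norm (a + b))\<^sup>2 \<le> e\<^sup>2 * (8 * (norm d)\<^sup>2 + 2 * (norm b)\<^sup>2)"
    by (simp add: mult_left_mono)
  moreover have "(norm (d - e *\<^sub>R (a + b)))\<^sup>2
      = (norm d)\<^sup>2 - 2 * e * (d \<bullet> a) - 2 * e * (d \<bullet> b) + e\<^sup>2 * (norm (a + b))\<^sup>2"
    by (simp only: power2_norm_eq_inner)
      (simp add: inner_diff_left inner_diff_right inner_add_left inner_add_right
        inner_commute power2_eq_square algebra_simps)
  ultimately show ?thesis by simp
qed

locale td_sampling = prob_space M
  for M :: "'w measure" and P :: "'s::finite \<Rightarrow> 's \<Rightarrow> real" and mu :: "'s \<Rightarrow> real"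
    and r :: "'s \<Rightarrow> real" and \<phi> :: "'s \<Rightarrow> real^'d" and \<gamma> :: real
    and S S' :: "nat \<Rightarrow> 'w \<Rightarrow> 's" and R :: "nat \<Rightarrow> 'w \<Rightarrow> real" +
  assumes gamma: "0 \<le> \<gamma>" "\<gamma> \<le> 1"
    and P_sum: "\<forall>s. (\<Sum>s'\<in>UNIV. P s s') = 1"
    and phi_bound: "\<forall>s. norm (\<phi> s) \<le> 1"
    and S_meas: "\<forall>t. S t \<in> measurable M (count_space UNIV)"
    and S'_meas: "\<forall>t. S' t \<in> measurable M (count_space UNIV)"
    and R_meas: "\<forall>t. R t \<in> borel_measurable M"
    and iid_indep: "indep_vars (\<lambda>_. sample_measure) (\<lambda>t \<omega>. (S t \<omega>, S' t \<omega>, R t \<omega>)) {1..}"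
    and iid_ident: "\<forall>t\<ge>1. distr M sample_measure (\<lambda>\<omega>. (S t \<omega>, S' t \<omega>, R t \<omega>))
                           = distr M sample_measure (\<lambda>\<omega>. (S 1 \<omega>, S' 1 \<omega>, R 1 \<omega>))"
    and sample_dist: "\<forall>t\<ge>1. \<forall>s s'. measure M {\<omega>\<in>space M. S t \<omega> = s \<and> S' t \<omega> = s'} = mu s * P s s'"
    and R_range: "\<forall>t\<ge>1. \<forall>\<omega>\<in>space M. 0 \<le> R t \<omega> \<and> R t \<omega> \<le> 1"
    and R_cond_mean: "\<forall>t\<ge>1. \<forall>s. (\<integral>\<omega>. R t \<omega> * indicator {\<omega>\<in>space M. S t \<omega> = s} \<omega> \<partial>M)
                                 = r s * measure M {\<omega>\<in>space M. S t \<omega> = s}"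
begin

abbreviation sample :: "nat \<Rightarrow> 'w \<Rightarrow> 's \<times> 's \<times> real" where
  "sample t \<omega> \<equiv> (S t \<omega>, S' t \<omega>, R t \<omega>)"

abbreviation past :: "nat \<Rightarrow> 'w \<Rightarrow> nat \<Rightarrow> 's \<times> 's \<times> real" where
  "past n \<omega> \<equiv> restrict (\<lambda>i. sample i \<omega>) {1..n}"

lemma sample_measurable [measurable]:
  "S t \<in> measurable M (count_space UNIV)" "S' t \<in> measurable M (count_space UNIV)"
  "R t \<in> borel_measurable M"
  using S_meas S'_meas R_meas by auto

lemma td_iter_measurable [measurable]: "td_iter eta \<gamma> \<phi> S S' R t \<in> borel_measurable M"
proof (induction t)
  case (Suc t)
  note [measurable] = Suc.IH
  show ?case unfolding td_iter.simps(2)[abs_def] Let_def sampleb_def by measurable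
qed (simp add: td_iter.simps(1)[abs_def])

lemma td_iter_bounded: "\<exists>B. \<forall>\<omega>\<in>space M. norm (td_iter eta \<gamma> \<phi> S S' R t \<omega>) \<le> B"
proof (induction t)
  case (Suc t)
  then obtain B where B: "\<forall>\<omega>\<in>space M. norm (td_iter eta \<gamma> \<phi> S S' R t \<omega>) \<le> B" by blast
  have "norm (td_iter eta \<gamma> \<phi> S S' R (Suc t) \<omega>) \<le> B + \<bar>eta (Suc t)\<bar> * (2 * B + 1)"
    if "\<omega> \<in> space M" for \<omega>
  proof -
    define \<theta> where "\<theta> = td_iter eta \<gamma> \<phi> S S' R t \<omega>"
    define \<xi> where "\<xi> = td_noise \<gamma> \<phi> \<theta> (S (Suc t) \<omega>) (S' (Suc t) \<omega>) (R (Suc t) \<omega>)"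
    have "norm \<theta> \<le> B" using B that by (simp add: \<theta>_def)
    moreover have "\<bar>R (Suc t) \<omega>\<bar> \<le> 1" using R_range that by auto
    ultimately have "norm \<xi> \<le> 2 * B + 1"
      using norm_td_noise_le[OF phi_bound gamma, of "R (Suc t) \<omega>" \<theta> "S (Suc t) \<omega>" "S' (Suc t) \<omega>"]
      unfolding \<xi>_def by linarith
    then have "\<bar>eta (Suc t)\<bar> * norm \<xi> \<le> \<bar>eta (Suc t)\<bar> * (2 * B + 1)"
      by (simp add: mult_left_mono)
    moreover have "td_iter eta \<gamma> \<phi> S S' R (Suc t) \<omega> = \<theta> - eta (Suc t) *\<^sub>R \<xi>"
      by (simp add: \<theta>_def \<xi>_def td_noise_def Let_def)
    ultimately show ?thesis
      using norm_triangle_ineq4[of \<theta> "eta (Suc t) *\<^sub>R \<xi>"] \<open>norm \<theta> \<le> B\<close> by simp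
  qed
  then show ?case by blast
qed (intro exI[of _ 0], simp)

lemma td_error_bounded: "\<exists>K. \<forall>\<omega>\<in>space M. norm (td_iter eta \<gamma> \<phi> S S' R t \<omega> - \<theta>) \<le> K"
proof -
  obtain B where B: "\<forall>\<omega>\<in>space M. norm (td_iter eta \<gamma> \<phi> S S' R t \<omega>) \<le> B"
    using td_iter_bounded by blast
  have "norm (td_iter eta \<gamma> \<phi> S S' R t \<omega> - \<theta>) \<le> B + norm \<theta>" if "\<omega> \<in> space M" for \<omega>
    using norm_triangle_ineq4[of "td_iter eta \<gamma> \<phi> S S' R t \<omega>" \<theta>] B that by fastforce
  then show ?thesis by blast
qed

lemma td_noise_sample_bounded:
  assumes "t \<ge> 1"
  shows "\<forall>\<omega>\<in>space M. norm (td_noise \<gamma> \<phi> \<theta> (S t \<omega>) (S' t \<omega>) (R t \<omega>)) \<le> 2 * norm \<theta> + 1"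
proof
  fix \<omega> assume "\<omega> \<in> space M"
  then have "\<bar>R t \<omega>\<bar> \<le> 1" using R_range assms by auto
  then show "norm (td_noise \<gamma> \<phi> \<theta> (S t \<omega>) (S' t \<omega>) (R t \<omega>)) \<le> 2 * norm \<theta> + 1"
    by (rule norm_td_noise_le[OF phi_bound gamma])
qed

lemma integrable_norm_sq_td_error: "integrable M (\<lambda>\<omega>. (norm (td_iter eta \<gamma> \<phi> S S' R t \<omega> - \<theta>))\<^sup>2)"
proof -
  obtain K where K: "\<forall>\<omega>\<in>space M. norm (td_iter eta \<gamma> \<phi> S S' R t \<omega> - \<theta>) \<le> K"
    using td_error_bounded by blast
  have "integrable M (\<lambda>\<omega>. (td_iter eta \<gamma> \<phi> S S' R t \<omega> - \<theta>) \<bullet> (td_iter eta \<gamma> \<phi> S S' R t \<omega> - \<theta>))"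
    by (rule integrable_inner_bounded[OF _ _ K K]) simp_all
  then show ?thesis unfolding power2_norm_eq_inner .
qed

lemma measure_S_eq:
  assumes "t \<ge> 1"
  shows "measure M {\<omega>\<in>space M. S t \<omega> = s} = mu s"
  using measure_finite_marginal[of "S t" "S' t" "\<lambda>s s'. mu s * P s s'" s] sample_dist P_sum assms
  by (simp flip: sum_distrib_left)

lemma integral_inner_sampleA:
  assumes "t \<ge> 1"
  shows "(\<integral>\<omega>. y \<bullet> (sampleA \<gamma> \<phi> (S t \<omega>) (S' t \<omega>) *v x) \<partial>M) = y \<bullet> (tdA mu P \<gamma> \<phi> *v x)"
proof -
  have "(\<integral>\<omega>. y \<bullet> (sampleA \<gamma> \<phi> (S t \<omega>) (S' t \<omega>) *v x) \<partial>M)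
      = (\<integral>\<omega>. (\<lambda>s s'. ((\<phi> s - \<gamma> *\<^sub>R \<phi> s') \<bullet> x) * (\<phi> s \<bullet> y)) (S t \<omega>) (S' t \<omega>) \<partial>M)"
    by (simp add: sampleA_mult_vector inner_commute)
  also have "\<dots> = (\<Sum>s\<in>UNIV. \<Sum>s'\<in>UNIV. mu s * P s s' * (((\<phi> s - \<gamma> *\<^sub>R \<phi> s') \<bullet> x) * (\<phi> s \<bullet> y)))"
    by (rule integral_finite_joint_distribution) (use sample_dist assms in auto)
  also have "\<dots> = y \<bullet> (tdA mu P \<gamma> \<phi> *v x)"
    by (simp add: inner_tdA mult_ac)
  finally show ?thesis .
qed

lemma integral_inner_td_noise:
  assumes "t \<ge> 1" and fixed_point: "tdA mu P \<gamma> \<phi> *v \<theta> = tdb mu r \<phi>"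
  shows "(\<integral>\<omega>. y \<bullet> td_noise \<gamma> \<phi> \<theta> (S t \<omega>) (S' t \<omega>) (R t \<omega>) \<partial>M) = 0"
proof -
  have R_bound: "\<forall>\<omega>\<in>space M. \<bar>R t \<omega>\<bar> \<le> 1" using R_range assms(1) by auto
  have "integrable M (\<lambda>\<omega>. y \<bullet> (sampleA \<gamma> \<phi> (S t \<omega>) (S' t \<omega>) *v \<theta>))"
    using norm_sampleA_mult_vector_le[OF phi_bound gamma]
    by (intro integrable_inner_bounded[where a = "norm y" and b = "2 * norm \<theta>"]) auto
  moreover have "integrable M (\<lambda>\<omega>. y \<bullet> sampleb \<phi> (S t \<omega>) (R t \<omega>))"
    using R_bound phi_bound
    by (intro integrable_inner_bounded[where a = "norm y" and b = 1])
      (auto simp: sampleb_def sampleb_def mult_le_one)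
  ultimately have "(\<integral>\<omega>. y \<bullet> td_noise \<gamma> \<phi> \<theta> (S t \<omega>) (S' t \<omega>) (R t \<omega>) \<partial>M)
      = (\<integral>\<omega>. y \<bullet> (sampleA \<gamma> \<phi> (S t \<omega>) (S' t \<omega>) *v \<theta>) \<partial>M) - (\<integral>\<omega>. R t \<omega> * (y \<bullet> \<phi> (S t \<omega>)) \<partial>M)"
    by (simp add: td_noise_def inner_diff_right sampleb_def)
  also have "(\<integral>\<omega>. R t \<omega> * (y \<bullet> \<phi> (S t \<omega>)) \<partial>M) = (\<Sum>s\<in>UNIV. r s * mu s * (y \<bullet> \<phi> s))"
  proof -
    have "integrable M (R t)"
      using R_bound by (intro integrable_const_bound[where B = 1]) auto
    with R_cond_mean assms(1) show ?thesis
      using integral_mult_finite_conditional_mean[of "S t" "R t" r "\<lambda>s. y \<bullet> \<phi> s"]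
      by (simp add: measure_S_eq)
  qed
  finally show ?thesis
    using integral_inner_sampleA[OF assms(1)] fixed_point by (simp add: inner_tdb mult_ac)
qed

lemma indep_past_next:
  "indep_var (PiM {1..n} (\<lambda>_. sample_measure)) (past n)
             (PiM {Suc n} (\<lambda>_. sample_measure)) (\<lambda>\<omega>. restrict (\<lambda>i. sample i \<omega>) {Suc n})"
proof -
  define K where "K b = (if b then {1..n} else {Suc n})" for b :: bool
  have "indep_vars (\<lambda>b. PiM (K b) (\<lambda>_. sample_measure)) (\<lambda>b \<omega>. restrict (\<lambda>i. sample i \<omega>) (K b)) UNIV"
    by (rule indep_vars_restrict[OF iid_indep]) (auto simp: K_def disjoint_family_on_def)
  moreover have "(\<lambda>b. PiM (K b) (\<lambda>_. sample_measure)) =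
      case_bool (PiM {1..n} (\<lambda>_. sample_measure)) (PiM {Suc n} (\<lambda>_. sample_measure))"
    by (simp add: fun_eq_iff K_def split: bool.split)
  moreover have "(\<lambda>b \<omega>. restrict (\<lambda>i. sample i \<omega>) (K b)) =
      case_bool (past n) (\<lambda>\<omega>. restrict (\<lambda>i. sample i \<omega>) {Suc n})"
    by (simp add: fun_eq_iff K_def split: bool.split)
  ultimately show ?thesis unfolding indep_var_def by metis
qed

lemma integral_past_next_freezing:
  fixes F :: "(nat \<Rightarrow> 's \<times> 's \<times> real) \<Rightarrow> 's \<times> 's \<times> real \<Rightarrow> real"
  assumes "(\<lambda>(x, z). F x z) \<in> borel_measurable (PiM {1..n} (\<lambda>_. sample_measure) \<Otimes>\<^sub>M sample_measure)"
    and "integrable M (\<lambda>\<omega>. F (past n \<omega>) (sample (Suc n) \<omega>))"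
  shows "(\<integral>\<omega>. F (past n \<omega>) (sample (Suc n) \<omega>) \<partial>M)
       = (\<integral>\<omega>. (\<integral>\<omega>'. F (past n \<omega>) (sample (Suc n) \<omega>') \<partial>M) \<partial>M)"
proof -
  have [measurable]: "(\<lambda>y. y (Suc n)) \<in> measurable (PiM {Suc n} (\<lambda>_. sample_measure)) sample_measure"
    by (rule measurable_component_singleton) simp
  note [measurable] = assms(1)
  have "(\<lambda>(x, y). F x (y (Suc n)))
      \<in> borel_measurable (PiM {1..n} (\<lambda>_. sample_measure) \<Otimes>\<^sub>M PiM {Suc n} (\<lambda>_. sample_measure))"
    by measurable
  from integral_indep_var_freezing[OF indep_past_next this,
      of "\<lambda>x. \<integral>\<omega>'. F x (sample (Suc n) \<omega>') \<partial>M"] assms(2)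
  show ?thesis by simp
qed

lemma integral_inner_error_sampleA:
  "(\<integral>\<omega>. (td_iter eta \<gamma> \<phi> S S' R n \<omega> - \<theta>) \<bullet>
         (sampleA \<gamma> \<phi> (S (Suc n) \<omega>) (S' (Suc n) \<omega>) *v (td_iter eta \<gamma> \<phi> S S' R n \<omega> - \<theta>)) \<partial>M)
   = (\<integral>\<omega>. (td_iter eta \<gamma> \<phi> S S' R n \<omega> - \<theta>) \<bullet> (tdA mu P \<gamma> \<phi> *v (td_iter eta \<gamma> \<phi> S S' R n \<omega> - \<theta>)) \<partial>M)"
proof -
  define \<Delta> where "\<Delta> x = td_iter_samples eta \<gamma> \<phi> n x - \<theta>" for x
  have [measurable]: "\<Delta> \<in> borel_measurable (PiM {1..n} (\<lambda>_. sample_measure))"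
    unfolding \<Delta>_def by measurable
  obtain K where K: "\<forall>\<omega>\<in>space M. norm (\<Delta> (past n \<omega>)) \<le> K"
    using td_error_bounded[of eta n \<theta>] by (auto simp: \<Delta>_def td_iter_eq_samples)
  moreover have "\<forall>\<omega>\<in>space M.
      norm (sampleA \<gamma> \<phi> (S (Suc n) \<omega>) (S' (Suc n) \<omega>) *v \<Delta> (past n \<omega>)) \<le> 2 * K"
    using K norm_sampleA_mult_vector_le[OF phi_bound gamma] by (fastforce intro: order_trans)
  ultimately have integrable: "integrable M (\<lambda>\<omega>. \<Delta> (past n \<omega>) \<bullet> (sampleA \<gamma> \<phi> (S (Suc n) \<omega>) (S' (Suc n) \<omega>) *v \<Delta> (past n \<omega>)))"
    by (rule integrable_inner_bounded[rotated 2]) measurable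
  have F_measurable: "(\<lambda>(x, z). \<Delta> x \<bullet> (sampleA \<gamma> \<phi> (fst z) (fst (snd z)) *v \<Delta> x))
      \<in> borel_measurable (PiM {1..n} (\<lambda>_. sample_measure) \<Otimes>\<^sub>M sample_measure)"
    by measurable
  have "(\<integral>\<omega>. \<Delta> (past n \<omega>) \<bullet> (sampleA \<gamma> \<phi> (S (Suc n) \<omega>) (S' (Suc n) \<omega>) *v \<Delta> (past n \<omega>)) \<partial>M)
      = (\<integral>\<omega>. (\<integral>\<omega>'. \<Delta> (past n \<omega>) \<bullet> (sampleA \<gamma> \<phi> (S (Suc n) \<omega>') (S' (Suc n) \<omega>') *v \<Delta> (past n \<omega>)) \<partial>M) \<partial>M)"
    by (rule integral_past_next_freezing[OF F_measurable, unfolded fst_conv snd_conv, OF integrable])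
  also have "\<dots> = (\<integral>\<omega>. \<Delta> (past n \<omega>) \<bullet> (tdA mu P \<gamma> \<phi> *v \<Delta> (past n \<omega>)) \<partial>M)"
    by (simp add: integral_inner_sampleA)
  finally show ?thesis by (simp add: \<Delta>_def td_iter_eq_samples)
qed

lemma integral_inner_error_td_noise:
  assumes "tdA mu P \<gamma> \<phi> *v \<theta> = tdb mu r \<phi>"
  shows "(\<integral>\<omega>. (td_iter eta \<gamma> \<phi> S S' R n \<omega> - \<theta>) \<bullet>
           td_noise \<gamma> \<phi> \<theta> (S (Suc n) \<omega>) (S' (Suc n) \<omega>) (R (Suc n) \<omega>) \<partial>M) = 0"
proof -
  define \<Delta> where "\<Delta> x = td_iter_samples eta \<gamma> \<phi> n x - \<theta>" for x
  have [measurable]: "\<Delta> \<in> borel_measurable (PiM {1..n} (\<lambda>_. sample_measure))"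
    unfolding \<Delta>_def by measurable
  obtain K where K: "\<forall>\<omega>\<in>space M. norm (\<Delta> (past n \<omega>)) \<le> K"
    using td_error_bounded[of eta n \<theta>] by (auto simp: \<Delta>_def td_iter_eq_samples)
  moreover note td_noise_sample_bounded[of "Suc n" \<theta>]
  ultimately have integrable: "integrable M (\<lambda>\<omega>. \<Delta> (past n \<omega>) \<bullet> td_noise \<gamma> \<phi> \<theta> (S (Suc n) \<omega>) (S' (Suc n) \<omega>) (R (Suc n) \<omega>))"
    by (rule integrable_inner_bounded[rotated 2]) measurable
  have F_measurable: "(\<lambda>(x, z). \<Delta> x \<bullet> td_noise \<gamma> \<phi> \<theta> (fst z) (fst (snd z)) (snd (snd z)))
      \<in> borel_measurable (PiM {1..n} (\<lambda>_. sample_measure) \<Otimes>\<^sub>M sample_measure)"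
    by measurable
  have "(\<integral>\<omega>. \<Delta> (past n \<omega>) \<bullet> td_noise \<gamma> \<phi> \<theta> (S (Suc n) \<omega>) (S' (Suc n) \<omega>) (R (Suc n) \<omega>) \<partial>M)
      = (\<integral>\<omega>. (\<integral>\<omega>'. \<Delta> (past n \<omega>) \<bullet> td_noise \<gamma> \<phi> \<theta> (S (Suc n) \<omega>') (S' (Suc n) \<omega>') (R (Suc n) \<omega>') \<partial>M) \<partial>M)"
    by (rule integral_past_next_freezing[OF F_measurable, unfolded fst_conv snd_conv, OF integrable])
  also have "\<dots> = 0"
    by (simp add: integral_inner_td_noise[OF _ assms])
  finally show ?thesis by (simp add: \<Delta>_def td_iter_eq_samples)
qed

lemma integral_sample_eq_first:
  fixes g :: "'s \<times> 's \<times> real \<Rightarrow> real"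
  assumes "t \<ge> 1" and g: "g \<in> borel_measurable sample_measure"
  shows "(\<integral>\<omega>. g (sample t \<omega>) \<partial>M) = (\<integral>\<omega>. g (sample 1 \<omega>) \<partial>M)"
proof -
  have sample: "sample k \<in> measurable M sample_measure" for k by measurable
  have "(\<integral>\<omega>. g (sample t \<omega>) \<partial>M) = integral\<^sup>L (distr M sample_measure (sample t)) g"
    by (rule integral_distr[OF sample g, symmetric])
  also have "distr M sample_measure (sample t) = distr M sample_measure (sample 1)"
    using iid_ident assms(1) by blast
  also have "integral\<^sup>L (distr M sample_measure (sample 1)) g = (\<integral>\<omega>. g (sample 1 \<omega>) \<partial>M)"
    by (rule integral_distr[OF sample g])
  finally show ?thesis .
qed

lemma integral_inner_error_sampleA_ge:
  assumes coercive: "\<And>x. c * (norm x)\<^sup>2 \<le> x \<bullet> (tdA mu P \<gamma> \<phi> *v x)"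
  shows "c * (\<integral>\<omega>. (norm (td_iter eta \<gamma> \<phi> S S' R n \<omega> - \<theta>))\<^sup>2 \<partial>M)
    \<le> (\<integral>\<omega>. (td_iter eta \<gamma> \<phi> S S' R n \<omega> - \<theta>) \<bullet>
         (sampleA \<gamma> \<phi> (S (Suc n) \<omega>) (S' (Suc n) \<omega>) *v (td_iter eta \<gamma> \<phi> S S' R n \<omega> - \<theta>)) \<partial>M)"
proof -
  define A where "A = tdA mu P \<gamma> \<phi>"
  define \<Delta> where "\<Delta> \<omega> = td_iter eta \<gamma> \<phi> S S' R n \<omega> - \<theta>" for \<omega>
  have [measurable]: "\<Delta> \<in> borel_measurable M" unfolding \<Delta>_def[abs_def] by measurable
  obtain K where K: "\<forall>\<omega>\<in>space M. norm (\<Delta> \<omega>) \<le> K"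
    using td_error_bounded unfolding \<Delta>_def by blast
  have "\<forall>\<omega>\<in>space M. norm (A *v \<Delta> \<omega>) \<le> onorm ((*v) A) * K"
    using K onorm[OF matrix_vector_mul_bounded_linear, of A] onorm_pos_le[OF matrix_vector_mul_bounded_linear, of A]
    by (meson mult_left_mono order_trans)
  moreover have "(\<lambda>\<omega>. A *v \<Delta> \<omega>) \<in> borel_measurable M"
    by (rule measurable_compose[OF _ borel_measurable_continuous_onI[OF matrix_vector_mult_linear_continuous_on]])
      measurable
  ultimately have "integrable M (\<lambda>\<omega>. \<Delta> \<omega> \<bullet> (A *v \<Delta> \<omega>))"
    by (intro integrable_inner_bounded[OF _ _ K]) simp_all
  moreover have "integrable M (\<lambda>\<omega>. c * (norm (\<Delta> \<omega>))\<^sup>2)"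
    unfolding \<Delta>_def by (intro integrable_mult_right integrable_norm_sq_td_error)
  ultimately have "(\<integral>\<omega>. c * (norm (\<Delta> \<omega>))\<^sup>2 \<partial>M) \<le> (\<integral>\<omega>. \<Delta> \<omega> \<bullet> (A *v \<Delta> \<omega>) \<partial>M)"
    using coercive unfolding A_def by (intro integral_mono) auto
  also have "\<dots> = (\<integral>\<omega>. \<Delta> \<omega> \<bullet> (sampleA \<gamma> \<phi> (S (Suc n) \<omega>) (S' (Suc n) \<omega>) *v \<Delta> \<omega>) \<partial>M)"
    unfolding A_def \<Delta>_def by (rule integral_inner_error_sampleA[symmetric])
  finally show ?thesis by (simp add: \<Delta>_def)
qed

lemma integral_norm_sq_td_noise_eq_first:
  assumes "t \<ge> 1"
  shows "(\<integral>\<omega>. (norm (td_noise \<gamma> \<phi> \<theta> (S t \<omega>) (S' t \<omega>) (R t \<omega>)))\<^sup>2 \<partial>M)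
       = (\<integral>\<omega>. (norm (td_noise \<gamma> \<phi> \<theta> (S 1 \<omega>) (S' 1 \<omega>) (R 1 \<omega>)))\<^sup>2 \<partial>M)"
proof -
  have "(\<lambda>z. (norm (td_noise \<gamma> \<phi> \<theta> (fst z) (fst (snd z)) (snd (snd z))))\<^sup>2) \<in> borel_measurable sample_measure"
    by measurable
  from integral_sample_eq_first[OF assms this] show ?thesis by simp
qed

lemma td_error_recursion:
  assumes fixed_point: "tdA mu P \<gamma> \<phi> *v \<theta> = tdb mu r \<phi>"
    and coercive: "\<And>x. c * (norm x)\<^sup>2 \<le> x \<bullet> (tdA mu P \<gamma> \<phi> *v x)"
    and "0 \<le> eta (Suc n)"
  shows "(\<integral>\<omega>. (norm (td_iter eta \<gamma> \<phi> S S' R (Suc n) \<omega> - \<theta>))\<^sup>2 \<partial>M)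
     \<le> (1 - 2 * c * eta (Suc n) + 8 * (eta (Suc n))\<^sup>2) * (\<integral>\<omega>. (norm (td_iter eta \<gamma> \<phi> S S' R n \<omega> - \<theta>))\<^sup>2 \<partial>M)
       + 2 * (\<integral>\<omega>. (norm (td_noise \<gamma> \<phi> \<theta> (S 1 \<omega>) (S' 1 \<omega>) (R 1 \<omega>)))\<^sup>2 \<partial>M) * (eta (Suc n))\<^sup>2"
proof -
  define e where "e = eta (Suc n)"
  define \<Delta> where "\<Delta> \<omega> = td_iter eta \<gamma> \<phi> S S' R n \<omega> - \<theta>" for \<omega>
  define a where "a \<omega> = sampleA \<gamma> \<phi> (S (Suc n) \<omega>) (S' (Suc n) \<omega>) *v \<Delta> \<omega>" for \<omega>
  define \<xi> where "\<xi> \<omega> = td_noise \<gamma> \<phi> \<theta> (S (Suc n) \<omega>) (S' (Suc n) \<omega>) (R (Suc n) \<omega>)" for \<omega>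
  define u where "u = (\<integral>\<omega>. (norm (\<Delta> \<omega>))\<^sup>2 \<partial>M)"
  define G where "G = (\<integral>\<omega>. (norm (td_noise \<gamma> \<phi> \<theta> (S 1 \<omega>) (S' 1 \<omega>) (R 1 \<omega>)))\<^sup>2 \<partial>M)"
  have [measurable]: "\<Delta> \<in> borel_measurable M" "a \<in> borel_measurable M" "\<xi> \<in> borel_measurable M"
    unfolding \<Delta>_def[abs_def] a_def[abs_def] \<xi>_def[abs_def] by measurable
  obtain K where K: "\<forall>\<omega>\<in>space M. norm (\<Delta> \<omega>) \<le> K"
    using td_error_bounded unfolding \<Delta>_def by blast
  have a_le: "norm (a \<omega>) \<le> 2 * norm (\<Delta> \<omega>)" for \<omega>
    unfolding a_def by (rule norm_sampleA_mult_vector_le[OF phi_bound gamma])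
  with K have a_bound: "\<forall>\<omega>\<in>space M. norm (a \<omega>) \<le> 2 * K"
    by (fastforce intro: order_trans)
  note \<xi>_bound = td_noise_sample_bounded[of "Suc n" \<theta>, folded \<xi>_def]
  have integrable: "integrable M (\<lambda>\<omega>. \<Delta> \<omega> \<bullet> \<Delta> \<omega>)" "integrable M (\<lambda>\<omega>. \<Delta> \<omega> \<bullet> a \<omega>)"
    "integrable M (\<lambda>\<omega>. \<Delta> \<omega> \<bullet> \<xi> \<omega>)" "integrable M (\<lambda>\<omega>. \<xi> \<omega> \<bullet> \<xi> \<omega>)"
    by (rule integrable_inner_bounded[OF _ _ K K] integrable_inner_bounded[OF _ _ K a_bound]
        integrable_inner_bounded[OF _ _ K \<xi>_bound] integrable_inner_bounded[OF _ _ \<xi>_bound \<xi>_bound];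
        simp)+
  have drift: "c * u \<le> (\<integral>\<omega>. \<Delta> \<omega> \<bullet> a \<omega> \<partial>M)"
    unfolding u_def \<Delta>_def a_def by (rule integral_inner_error_sampleA_ge[OF coercive])
  have cross: "(\<integral>\<omega>. \<Delta> \<omega> \<bullet> \<xi> \<omega> \<partial>M) = 0"
    unfolding \<Delta>_def \<xi>_def by (rule integral_inner_error_td_noise[OF fixed_point])
  have noise: "(\<integral>\<omega>. \<xi> \<omega> \<bullet> \<xi> \<omega> \<partial>M) = G"
    using integral_norm_sq_td_noise_eq_first[of "Suc n" \<theta>]
    unfolding G_def \<xi>_def power2_norm_eq_inner by simp
  have pointwise: "(td_iter eta \<gamma> \<phi> S S' R (Suc n) \<omega> - \<theta>) \<bullet> (td_iter eta \<gamma> \<phi> S S' R (Suc n) \<omega> - \<theta>)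
      \<le> \<Delta> \<omega> \<bullet> \<Delta> \<omega> - 2 * e * (\<Delta> \<omega> \<bullet> a \<omega>) - 2 * e * (\<Delta> \<omega> \<bullet> \<xi> \<omega>)
         + e\<^sup>2 * (8 * (\<Delta> \<omega> \<bullet> \<Delta> \<omega>) + 2 * (\<xi> \<omega> \<bullet> \<xi> \<omega>))" for \<omega>
    using norm_sq_descent_step_le[OF a_le, of \<omega> e "\<xi> \<omega>"]
    unfolding td_iter_Suc_minus power2_norm_eq_inner \<Delta>_def a_def \<xi>_def e_def .
  have "(\<integral>\<omega>. (norm (td_iter eta \<gamma> \<phi> S S' R (Suc n) \<omega> - \<theta>))\<^sup>2 \<partial>M)
      \<le> (\<integral>\<omega>. \<Delta> \<omega> \<bullet> \<Delta> \<omega> - 2 * e * (\<Delta> \<omega> \<bullet> a \<omega>) - 2 * e * (\<Delta> \<omega> \<bullet> \<xi> \<omega>)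
         + e\<^sup>2 * (8 * (\<Delta> \<omega> \<bullet> \<Delta> \<omega>) + 2 * (\<xi> \<omega> \<bullet> \<xi> \<omega>)) \<partial>M)"
    unfolding power2_norm_eq_inner
    by (rule integral_mono[OF integrable_norm_sq_td_error[unfolded power2_norm_eq_inner]])
      (use integrable pointwise in simp_all)
  also have "\<dots> = u - 2 * e * (\<integral>\<omega>. \<Delta> \<omega> \<bullet> a \<omega> \<partial>M) + e\<^sup>2 * (8 * u + 2 * G)"
    using integrable by (simp add: u_def cross noise power2_norm_eq_inner)
  also have "\<dots> \<le> u - 2 * e * (c * u) + e\<^sup>2 * (8 * u + 2 * G)"
    using drift \<open>0 \<le> eta (Suc n)\<close> by (simp add: e_def mult_left_mono)
  also have "\<dots> = (1 - 2 * c * e + 8 * e\<^sup>2) * u + 2 * G * e\<^sup>2"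
    by (simp add: algebra_simps)
  finally show ?thesis
    unfolding G_def e_def u_def \<Delta>_def .
qed

lemma trace_td_noise_covariance:
  "trace (\<integral>\<omega>. outer (td_noise \<gamma> \<phi> \<theta> (S 1 \<omega>) (S' 1 \<omega>) (R 1 \<omega>)) (td_noise \<gamma> \<phi> \<theta> (S 1 \<omega>) (S' 1 \<omega>) (R 1 \<omega>)) \<partial>M)
   = (\<integral>\<omega>. (norm (td_noise \<gamma> \<phi> \<theta> (S 1 \<omega>) (S' 1 \<omega>) (R 1 \<omega>)))\<^sup>2 \<partial>M)"
proof (rule trace_integral_outer_self)
  note bound = td_noise_sample_bounded[OF order.refl, of \<theta>]
  have "integrable M (\<lambda>\<omega>. td_noise \<gamma> \<phi> \<theta> (S 1 \<omega>) (S' 1 \<omega>) (R 1 \<omega>) \<bullet> td_noise \<gamma> \<phi> \<theta> (S 1 \<omega>) (S' 1 \<omega>) (R 1 \<omega>))"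
    by (rule integrable_inner_bounded[OF _ _ bound bound]; measurable)
  then show "integrable M (\<lambda>\<omega>. (norm (td_noise \<gamma> \<phi> \<theta> (S 1 \<omega>) (S' 1 \<omega>) (R 1 \<omega>)))\<^sup>2)"
    unfolding power2_norm_eq_inner .
qed measurable

lemma td_mean_square_error_powr_step_size:
  assumes fixed_point: "tdA mu P \<gamma> \<phi> *v \<theta> = tdb mu r \<phi>"
    and coercive: "\<And>x. c * (norm x)\<^sup>2 \<le> x \<bullet> (tdA mu P \<gamma> \<phi> *v x)" and "c > 0"
    and "1/2 < \<alpha>" "\<alpha> < 1" "\<eta>0 > 0"
  shows "\<exists>D. \<forall>t\<ge>1. (\<integral>\<omega>. (norm (td_iter (\<lambda>k. \<eta>0 * real k powr (-\<alpha>)) \<gamma> \<phi> S S' R t \<omega> - \<theta>))\<^sup>2 \<partial>M)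
    \<le> 3 * \<eta>0 * (\<integral>\<omega>. (norm (td_noise \<gamma> \<phi> \<theta> (S 1 \<omega>) (S' 1 \<omega>) (R 1 \<omega>)))\<^sup>2 \<partial>M) / c * real t powr (-\<alpha>)
        + D / real t"
proof -
  define G where "G = (\<integral>\<omega>. (norm (td_noise \<gamma> \<phi> \<theta> (S 1 \<omega>) (S' 1 \<omega>) (R 1 \<omega>)))\<^sup>2 \<partial>M)"
  have "\<exists>D. \<forall>t\<ge>1. (\<integral>\<omega>. (norm (td_iter (\<lambda>k. \<eta>0 * real k powr (-\<alpha>)) \<gamma> \<phi> S S' R t \<omega> - \<theta>))\<^sup>2 \<partial>M)
      \<le> 3 * G / c * (\<eta>0 * real t powr (-\<alpha>)) + D / real t"
  proof (rule decaying_recursion_bound)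
    show "0 \<le> G" by (simp add: G_def)
    show "(\<integral>\<omega>. (norm (td_iter (\<lambda>k. \<eta>0 * real k powr (-\<alpha>)) \<gamma> \<phi> S S' R (Suc n) \<omega> - \<theta>))\<^sup>2 \<partial>M)
      \<le> (1 - 2 * c * (\<eta>0 * real (Suc n) powr (-\<alpha>)) + 8 * (\<eta>0 * real (Suc n) powr (-\<alpha>))\<^sup>2)
         * (\<integral>\<omega>. (norm (td_iter (\<lambda>k. \<eta>0 * real k powr (-\<alpha>)) \<gamma> \<phi> S S' R n \<omega> - \<theta>))\<^sup>2 \<partial>M)
         + 2 * G * (\<eta>0 * real (Suc n) powr (-\<alpha>))\<^sup>2" for n
      using td_error_recursion[OF fixed_point coercive, of "\<lambda>k. \<eta>0 * real k powr (-\<alpha>)" n] \<open>\<eta>0 > 0\<close>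
      by (simp add: G_def mult_ac)
  qed (use assms powr_step_size_conditions[of \<alpha> c \<eta>0] in auto)
  then show ?thesis by (simp add: G_def mult_ac)
qed

end

theorem mainTheorem19:
  fixes M :: "'w measure"
    and P :: "'s::finite \<Rightarrow> 's \<Rightarrow> real" and mu :: "'s \<Rightarrow> real"
    and r :: "'s \<Rightarrow> real" and \<phi> :: "'s \<Rightarrow> real^'d"
    and \<gamma> \<alpha> \<eta>0 :: real
    and S S' :: "nat \<Rightarrow> 'w \<Rightarrow> 's" and R :: "nat \<Rightarrow> 'w \<Rightarrow> real"
  assumes gamma: "0 \<le> \<gamma>" "\<gamma> < 1"
    and P_kernel: "\<forall>s s'. 0 \<le> P s s'" "\<forall>s. (\<Sum>s'\<in>UNIV. P s s') = 1"
    and mu_stat: "stationary P mu"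
    and mu_unique: "\<forall>nu. stationary P nu \<longrightarrow> nu = mu"
    and r_range: "\<forall>s. 0 \<le> r s \<and> r s \<le> 1"
    and phi_bound: "\<forall>s. norm (\<phi> s) \<le> 1"
    and lambda0_pos: "lambda_min (tdSigma mu \<phi>) > 0"
    and prob: "prob_space M"
    and S_meas: "\<forall>t. S t \<in> measurable M (count_space UNIV)"
    and S'_meas: "\<forall>t. S' t \<in> measurable M (count_space UNIV)"
    and R_meas: "\<forall>t. R t \<in> borel_measurable M"
    and iid_indep: "prob_space.indep_vars M (\<lambda>_. count_space UNIV \<Otimes>\<^sub>M count_space UNIV \<Otimes>\<^sub>M borel)
                       (\<lambda>t \<omega>. (S t \<omega>, S' t \<omega>, R t \<omega>)) {1..}"
    and iid_ident: "\<forall>t\<ge>1. distr M (count_space UNIV \<Otimes>\<^sub>M count_space UNIV \<Otimes>\<^sub>M borel) (\<lambda>\<omega>. (S t \<omega>, S' t \<omega>, R t \<omega>))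
                       = distr M (count_space UNIV \<Otimes>\<^sub>M count_space UNIV \<Otimes>\<^sub>M borel) (\<lambda>\<omega>. (S 1 \<omega>, S' 1 \<omega>, R 1 \<omega>))"
    and sample_dist: "\<forall>t\<ge>1. \<forall>s s'. measure M {\<omega>\<in>space M. S t \<omega> = s \<and> S' t \<omega> = s'} = mu s * P s s'"
    and R_range: "\<forall>t\<ge>1. \<forall>\<omega>\<in>space M. 0 \<le> R t \<omega> \<and> R t \<omega> \<le> 1"
    and R_cond_mean: "\<forall>t\<ge>1. \<forall>s. (\<integral>\<omega>. R t \<omega> * indicator {\<omega>\<in>space M. S t \<omega> = s} \<omega> \<partial>M)
                         = r s * measure M {\<omega>\<in>space M. S t \<omega> = s}"
    and alpha: "1/2 < \<alpha>" "\<alpha> < 1"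
    and eta0: "0 < \<eta>0" "\<eta>0 \<le> 1/2"
  shows "\<exists>C. \<forall>t::nat. t \<ge> 1 \<longrightarrow>
    (let \<theta>star = matrix_inv (tdA mu P \<gamma> \<phi>) *v tdb mu r \<phi>;
         \<Gamma> = (\<integral>\<omega>. outer (sampleA \<gamma> \<phi> (S 1 \<omega>) (S' 1 \<omega>) *v \<theta>star - sampleb \<phi> (S 1 \<omega>) (R 1 \<omega>))
                         (sampleA \<gamma> \<phi> (S 1 \<omega>) (S' 1 \<omega>) *v \<theta>star - sampleb \<phi> (S 1 \<omega>) (R 1 \<omega>)) \<partial>M);
         lam0 = lambda_min (tdSigma mu \<phi>)
     in (\<integral>\<omega>. (norm (td_iter (\<lambda>k. \<eta>0 * real k powr (-\<alpha>)) \<gamma> \<phi> S S' R t \<omega> - \<theta>star))\<^sup>2 \<partial>M)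
        \<le> 3 * \<eta>0 * trace \<Gamma> / ((1 - \<gamma>) * lam0) * real t powr (-\<alpha>) + C / real t)"
proof -
  interpret td_sampling M P mu r \<phi> \<gamma> S S' R
    by (intro td_sampling.intro td_sampling_axioms.intro prob gamma(1) less_imp_le[OF gamma(2)]
        P_kernel(2) phi_bound S_meas S'_meas R_meas iid_indep iid_ident sample_dist R_range R_cond_mean)
  define \<theta>star where "\<theta>star = matrix_inv (tdA mu P \<gamma> \<phi>) *v tdb mu r \<phi>"
  define c where "c = (1 - \<gamma>) * lambda_min (tdSigma mu \<phi>)"
  have "c > 0" using \<open>\<gamma> < 1\<close> lambda0_pos by (simp add: c_def)
  have coercive: "c * (norm x)\<^sup>2 \<le> x \<bullet> (tdA mu P \<gamma> \<phi> *v x)" for x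
    unfolding c_def using tdA_coercive[OF \<open>0 \<le> \<gamma>\<close> _ P_kernel mu_stat] \<open>\<gamma> < 1\<close> by simp
  have fixed_point: "tdA mu P \<gamma> \<phi> *v \<theta>star = tdb mu r \<phi>"
    unfolding \<theta>star_def by (rule matrix_inv_solves_coercive[OF \<open>c > 0\<close> coercive])
  obtain C where "\<forall>t\<ge>1. (\<integral>\<omega>. (norm (td_iter (\<lambda>k. \<eta>0 * real k powr (-\<alpha>)) \<gamma> \<phi> S S' R t \<omega> - \<theta>star))\<^sup>2 \<partial>M)
    \<le> 3 * \<eta>0 * (\<integral>\<omega>. (norm (td_noise \<gamma> \<phi> \<theta>star (S 1 \<omega>) (S' 1 \<omega>) (R 1 \<omega>)))\<^sup>2 \<partial>M) / c
          * real t powr (-\<alpha>) + C / real t"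
    using td_mean_square_error_powr_step_size[OF fixed_point coercive \<open>c > 0\<close> alpha eta0(1)] by blast
  then show ?thesis
    unfolding Let_def \<theta>star_def[symmetric] td_noise_def[symmetric] trace_td_noise_covariance
    by (auto simp: c_def)
qed

end
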